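(* Let $E$ be a finite non-abelian $p$-group of nilpotency class $2$ with cyclic centre. For $n\ge0$ let $E_n=E^{p^n}$ with coordinates indexed by $1,\dots,p^n$, $Z_n=Z(E_n)$, $F_n=\{(x^{(i)})\in Z_n:x^{(1)}\cdots x^{(p^n)}=1\}$, $K_n=E_n/F_n$, $L_n=Z_n/F_n$. Let $J_n=K_n\rtimes\langle\alpha_n\rangle$, where $\alpha_n$ has order $p^n$ and acts by the cyclic shift induced from $E_n$: conjugation by $\alpha_n$ sends $x=(x^{(i)})$ to $y$ with $y^{(i)}=x^{(i-1)}$, indices mod $p^n$ in $\{1,\dots,p^n\}$ (so $J_n$ is the wreath-central product of $E$ with $C_{p^n}$). For $n\ge1$ define $\varphi_n:E_n\to E_{n-1}$ by letting the $i$-th coordinate of $\varphi_n(x)$ be $\prod_{r\equiv i\ (\mathrm{mod}\ p^{n-1})}x^{(r)}$, factors in increasing order of $r$. Then $\varphi_n$ induces a homomorphism $\psi_n:K_n/L_n\cong E_n/Z_n\to E_{n-1}/Z_{n-1}\cong K_{n-1}/L_{n-1}$, and $\psi_n$ extends, via $\psi_n(\alpha_n)=\alpha_{n-1}$, to a homomorphism $J_n/L_n\to J_{n-1}/L_{n-1}$. *)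

theory Defs
  imports "HOL-Algebra.Algebra"
begin

definition grp_center :: "('a, 'b) monoid_scheme \<Rightarrow> 'a set" where
  "grp_center G = {z \<in> carrier G. \<forall>x \<in> carrier G. z \<otimes>\<^bsub>G\<^esub> x = x \<otimes>\<^bsub>G\<^esub> z}"

definition nilpotency_class_two :: "('a, 'b) monoid_scheme \<Rightarrow> bool" where
  "nilpotency_class_two G \<longleftrightarrow>
     \<not> comm_group G \<and>
     (\<forall>x \<in> carrier G. \<forall>y \<in> carrier G.
        x \<otimes>\<^bsub>G\<^esub> y \<otimes>\<^bsub>G\<^esub> inv\<^bsub>G\<^esub> x \<otimes>\<^bsub>G\<^esub> inv\<^bsub>G\<^esub> y \<in> grp_center G)"

(* E_n = E^{p^n}, coordinates indexed by 0..p^n-1 (paper: 1..p^n) *)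
definition En :: "('a, 'b) monoid_scheme \<Rightarrow> nat \<Rightarrow> nat \<Rightarrow> (nat \<Rightarrow> 'a) monoid" where
  "En E p n = product_group {..<p ^ n} (\<lambda>_. E)"

definition Zn :: "('a, 'b) monoid_scheme \<Rightarrow> nat \<Rightarrow> nat \<Rightarrow> (nat \<Rightarrow> 'a) set" where
  "Zn E p n = grp_center (En E p n)"

definition Fn :: "('a, 'b) monoid_scheme \<Rightarrow> nat \<Rightarrow> nat \<Rightarrow> (nat \<Rightarrow> 'a) set" where
  "Fn E p n = {x \<in> Zn E p n. foldr (\<otimes>\<^bsub>E\<^esub>) (map x [0..<p ^ n]) \<one>\<^bsub>E\<^esub> = \<one>\<^bsub>E\<^esub>}"

definition Kn :: "('a, 'b) monoid_scheme \<Rightarrow> nat \<Rightarrow> nat \<Rightarrow> (nat \<Rightarrow> 'a) set monoid" where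
  "Kn E p n = En E p n Mod Fn E p n"

definition shift :: "nat \<Rightarrow> nat \<Rightarrow> (nat \<Rightarrow> 'a) \<Rightarrow> (nat \<Rightarrow> 'a)" where
  "shift p n x = (\<lambda>i \<in> {..<p ^ n}. x ((i + p ^ n - 1) mod p ^ n))"

(* semidirect product K \<rtimes> C_m, where the generator alpha acts on K by sigma:
   elements (a, i) stand for a * alpha^i, and (a,i)(b,j) = (a * sigma^i(b), i+j mod m) *)
definition semidirect_cyclic ::
  "('k, 'c) monoid_scheme \<Rightarrow> ('k \<Rightarrow> 'k) \<Rightarrow> nat \<Rightarrow> ('k \<times> nat) monoid" where
  "semidirect_cyclic K \<sigma> m =
     \<lparr>carrier = carrier K \<times> {..<m},
      monoid.mult = (\<lambda>(a, i) (b, j). (a \<otimes>\<^bsub>K\<^esub> (\<sigma> ^^ i) b, (i + j) mod m)),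
      one = (\<one>\<^bsub>K\<^esub>, 0)\<rparr>"

definition Jn :: "('a, 'b) monoid_scheme \<Rightarrow> nat \<Rightarrow> nat \<Rightarrow> ((nat \<Rightarrow> 'a) set \<times> nat) monoid" where
  "Jn E p n = semidirect_cyclic (Kn E p n) (\<lambda>B. shift p n ` B) (p ^ n)"

definition alpha :: "('a, 'b) monoid_scheme \<Rightarrow> nat \<Rightarrow> nat \<Rightarrow> (nat \<Rightarrow> 'a) set \<times> nat" where
  "alpha E p n = (Fn E p n, 1 mod p ^ n)"

definition inK :: "('a, 'b) monoid_scheme \<Rightarrow> nat \<Rightarrow> nat \<Rightarrow> (nat \<Rightarrow> 'a) \<Rightarrow> (nat \<Rightarrow> 'a) set \<times> nat" where
  "inK E p n x = (Fn E p n #>\<^bsub>En E p n\<^esub> x, 0)"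

definition Ln :: "('a, 'b) monoid_scheme \<Rightarrow> nat \<Rightarrow> nat \<Rightarrow> ((nat \<Rightarrow> 'a) set \<times> nat) set" where
  "Ln E p n = inK E p n ` Zn E p n"

definition phi :: "('a, 'b) monoid_scheme \<Rightarrow> nat \<Rightarrow> nat \<Rightarrow> (nat \<Rightarrow> 'a) \<Rightarrow> (nat \<Rightarrow> 'a)" where
  "phi E p n x = (\<lambda>i \<in> {..<p ^ (n - 1)}.
       foldr (\<otimes>\<^bsub>E\<^esub>) (map (\<lambda>j. x (i + j * p ^ (n - 1))) [0..<p]) \<one>\<^bsub>E\<^esub>)"

end

theory Submission
  imports Defs
begin

(*
  Since E has nilpotency class two, E/Z(E) is abelian, and the centre of E_n = E^(p^n) consists
  of the tuples with central coordinates.  Modulo Z_(n-1), the factors in the coordinate products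
  defining phi_n may therefore be regrouped and cyclically rotated.  Hence phi_n is a
  homomorphism modulo Z_(n-1), maps Z_n into Z_(n-1), and intertwines the cyclic shifts modulo
  Z_(n-1): the shift merely renames the coordinates of phi_n(x), except at the coordinate 0, whose
  product it rotates cyclically.

  For the second, L_n is central in K_n and shift-invariant, so it is normal in the semidirect
  product J_n = K_n x| <alpha_n>.  A map K_n -> K_(n-1) which is a homomorphism modulo L_(n-1) and
  intertwines the shifts modulo L_(n-1), paired with the reduction of exponents of alpha modulo
  p^(n-1) (a divisor of p^n), induces a homomorphism J_n/L_n -> J_(n-1)/L_(n-1).
*)

abbreviation list_prod :: "('a, 'b) monoid_scheme \<Rightarrow> 'a list \<Rightarrow> 'a" where
  "list_prod G xs \<equiv> foldr (\<otimes>\<^bsub>G\<^esub>) xs \<one>\<^bsub>G\<^esub>"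

lemma (in group) rcos_eq_iff_mult_inv_mem:
  assumes "subgroup H G" "x \<in> carrier G" "y \<in> carrier G"
  shows "H #> x = H #> y \<longleftrightarrow> x \<otimes> inv y \<in> H"
  using assms repr_independence repr_independenceD subgroup.rcos_module is_group
  by metis

lemma (in group) normal_if_central:
  assumes "subgroup H G" and "\<And>h x. h \<in> H \<Longrightarrow> x \<in> carrier G \<Longrightarrow> h \<otimes> x = x \<otimes> h"
  shows "H \<lhd> G"
  using assms by (intro normalI) (auto simp: r_coset_def l_coset_def)

lemma image_rcos_hom:
  assumes "h \<in> hom G H" "N \<subseteq> carrier G" "x \<in> carrier G"
  shows "h ` (N #>\<^bsub>G\<^esub> x) = h ` N #>\<^bsub>H\<^esub> h x"
proof -
  have "h ` (N #>\<^bsub>G\<^esub> x) = (\<lambda>n. h (n \<otimes>\<^bsub>G\<^esub> x)) ` N"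
    by (auto simp: r_coset_def)
  also have "\<dots> = (\<lambda>n. h n \<otimes>\<^bsub>H\<^esub> h x) ` N"
    using assms by (auto simp: hom_mult subsetD)
  also have "\<dots> = h ` N #>\<^bsub>H\<^esub> h x"
    by (auto simp: r_coset_def)
  finally show ?thesis .
qed

lemma induced_FactGroup_hom:
  assumes G: "N \<lhd> G" and H: "M \<lhd> H"
    and hom: "(\<lambda>x. M #>\<^bsub>H\<^esub> f x) \<in> hom G (H Mod M)"
    and f_N: "f ` N \<subseteq> M"
  shows "\<exists>\<psi> \<in> hom (G Mod N) (H Mod M). \<forall>x \<in> carrier G. \<psi> (N #>\<^bsub>G\<^esub> x) = M #>\<^bsub>H\<^esub> f x"
proof -
  interpret N: normal N G by fact
  interpret M: normal M H by fact
  interpret group_hom G "H Mod M" "\<lambda>x. M #>\<^bsub>H\<^esub> f x"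
    using hom N.is_group M.factorgroup_is_group by (simp add: group_hom_def group_hom_axioms_def)
  have "N \<subseteq> kernel G (H Mod M) (\<lambda>x. M #>\<^bsub>H\<^esub> f x)"
  proof
    fix x assume x: "x \<in> N"
    with f_N have "M #>\<^bsub>H\<^esub> f x = M"
      using M.rcos_const by blast
    with x show "x \<in> kernel G (H Mod M) (\<lambda>x. M #>\<^bsub>H\<^esub> f x)"
      using N.subset by (auto simp: kernel_def)
  qed
  then obtain \<psi> where "\<psi> \<in> hom (G Mod N) (H Mod M)" "\<And>x. x \<in> carrier G \<Longrightarrow> \<psi> (N #>\<^bsub>G\<^esub> x) = M #>\<^bsub>H\<^esub> f x"
    using FactGroup_universal_kernel[OF G] by metis
  then show ?thesis by blast
qed

lemma rcos_FactGroup_image_eqI: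
  assumes H: "H \<lhd> G" and Z: "subgroup Z G" and "H \<subseteq> Z"
    and x: "x \<in> carrier G" and y: "y \<in> carrier G" and xy: "Z #>\<^bsub>G\<^esub> x = Z #>\<^bsub>G\<^esub> y"
  shows "(\<lambda>z. H #>\<^bsub>G\<^esub> z) ` Z #>\<^bsub>G Mod H\<^esub> (H #>\<^bsub>G\<^esub> x)
       = (\<lambda>z. H #>\<^bsub>G\<^esub> z) ` Z #>\<^bsub>G Mod H\<^esub> (H #>\<^bsub>G\<^esub> y)"
proof -
  interpret H: normal H G by (rule H)
  interpret Q: group "G Mod H" by (rule H.factorgroup_is_group)
  interpret group_hom G "G Mod H" "\<lambda>z. H #>\<^bsub>G\<^esub> z"
    by (intro group_hom.intro group_hom_axioms.intro H.is_group Q.is_group H.r_coset_hom_Mod)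
  have "x \<otimes>\<^bsub>G\<^esub> inv\<^bsub>G\<^esub> y \<in> Z"
    using xy x y H.rcos_eq_iff_mult_inv_mem[OF Z] by simp
  moreover have "(H #>\<^bsub>G\<^esub> x) \<otimes>\<^bsub>G Mod H\<^esub> inv\<^bsub>G Mod H\<^esub> (H #>\<^bsub>G\<^esub> y)
      = H #>\<^bsub>G\<^esub> (x \<otimes>\<^bsub>G\<^esub> inv\<^bsub>G\<^esub> y)"
    by (metis H.inv_closed hom_inv hom_mult x y)
  ultimately have "(H #>\<^bsub>G\<^esub> x) \<otimes>\<^bsub>G Mod H\<^esub> inv\<^bsub>G Mod H\<^esub> (H #>\<^bsub>G\<^esub> y) \<in> (\<lambda>z. H #>\<^bsub>G\<^esub> z) ` Z"
    by simp
  then show ?thesis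
    using x y Q.rcos_eq_iff_mult_inv_mem[OF subgroup_img_is_subgroup[OF Z]] by simp
qed

lemma grp_center_memI:
  "z \<in> carrier G \<Longrightarrow> (\<And>x. x \<in> carrier G \<Longrightarrow> z \<otimes>\<^bsub>G\<^esub> x = x \<otimes>\<^bsub>G\<^esub> z) \<Longrightarrow> z \<in> grp_center G"
  unfolding grp_center_def by blast

lemma grp_center_carrier: "z \<in> grp_center G \<Longrightarrow> z \<in> carrier G"
  unfolding grp_center_def by blast

lemma grp_center_commute: "z \<in> grp_center G \<Longrightarrow> x \<in> carrier G \<Longrightarrow> z \<otimes>\<^bsub>G\<^esub> x = x \<otimes>\<^bsub>G\<^esub> z"
  unfolding grp_center_def by blast

lemma (in group) subgroup_center: "subgroup (grp_center G) G"
proof (rule subgroupI)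
  show "grp_center G \<subseteq> carrier G" by (auto intro: grp_center_carrier)
  show "grp_center G \<noteq> {}" using grp_center_memI[of \<one> G] by auto
next
  fix z w assume z: "z \<in> grp_center G" and w: "w \<in> grp_center G"
  note zc = grp_center_carrier[OF z] and wc = grp_center_carrier[OF w]
  show "z \<otimes> w \<in> grp_center G"
  proof (rule grp_center_memI)
    fix x assume x: "x \<in> carrier G"
    have "z \<otimes> w \<otimes> x = z \<otimes> (x \<otimes> w)"
      using zc wc x by (simp add: m_assoc grp_center_commute[OF w x])
    also have "\<dots> = x \<otimes> (z \<otimes> w)"
      using zc wc x by (simp add: m_assoc[symmetric] grp_center_commute[OF z x])
    finally show "z \<otimes> w \<otimes> x = x \<otimes> (z \<otimes> w)" .
  qed (use zc wc in simp)
  show "inv z \<in> grp_center G"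
  proof (rule grp_center_memI)
    fix x assume x: "x \<in> carrier G"
    have "inv z \<otimes> x = inv z \<otimes> (x \<otimes> z) \<otimes> inv z"
      using zc x by (simp add: m_assoc)
    also have "\<dots> = inv z \<otimes> (z \<otimes> x) \<otimes> inv z"
      by (simp add: grp_center_commute[OF z x])
    also have "\<dots> = x \<otimes> inv z"
      using zc x by (simp add: m_assoc[symmetric])
    finally show "inv z \<otimes> x = x \<otimes> inv z" .
  qed (use zc in simp)
qed

lemma (in group) normal_center: "grp_center G \<lhd> G"
  by (rule normal_if_central[OF subgroup_center]) (rule grp_center_commute)

lemma (in group) comm_group_center: "comm_group (G\<lparr>carrier := grp_center G\<rparr>)"
proof (rule group.group_comm_groupI[OF subgroup_imp_group[OF subgroup_center]])
  fix z w assume "z \<in> carrier (G\<lparr>carrier := grp_center G\<rparr>)" "w \<in> carrier (G\<lparr>carrier := grp_center G\<rparr>)"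
  then show "z \<otimes>\<^bsub>G\<lparr>carrier := grp_center G\<rparr>\<^esub> w = w \<otimes>\<^bsub>G\<lparr>carrier := grp_center G\<rparr>\<^esub> z"
    using grp_center_commute[of z G w] grp_center_carrier[of w G] by simp
qed

lemma (in group) comm_group_Mod_center:
  assumes "\<And>x y. x \<in> carrier G \<Longrightarrow> y \<in> carrier G \<Longrightarrow> x \<otimes> y \<otimes> inv x \<otimes> inv y \<in> grp_center G"
  shows "comm_group (G Mod grp_center G)"
proof -
  interpret Z: normal "grp_center G" G by (rule normal_center)
  show ?thesis
  proof (rule group.group_comm_groupI[OF Z.factorgroup_is_group])
    fix A B assume "A \<in> carrier (G Mod grp_center G)" "B \<in> carrier (G Mod grp_center G)"
    then obtain x y where x: "x \<in> carrier G" "A = grp_center G #> x"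
      and y: "y \<in> carrier G" "B = grp_center G #> y"
      by (auto simp: carrier_FactGroup)
    have "x \<otimes> y \<otimes> inv (y \<otimes> x) = x \<otimes> y \<otimes> inv x \<otimes> inv y"
      using x y by (simp add: inv_mult_group m_assoc)
    then have "grp_center G #> (x \<otimes> y) = grp_center G #> (y \<otimes> x)"
      using x y assms rcos_eq_iff_mult_inv_mem[OF subgroup_center] by simp
    then show "A \<otimes>\<^bsub>G Mod grp_center G\<^esub> B = B \<otimes>\<^bsub>G Mod grp_center G\<^esub> A"
      using x y by (simp add: Z.rcos_sum)
  qed
qed

lemma center_product_group:
  assumes "\<And>i. i \<in> I \<Longrightarrow> group (G i)"
  shows "grp_center (product_group I G) = (\<Pi>\<^sub>E i\<in>I. grp_center (G i))"
proof
  show "grp_center (product_group I G) \<subseteq> (\<Pi>\<^sub>E i\<in>I. grp_center (G i))"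
  proof
    fix z assume z: "z \<in> grp_center (product_group I G)"
    have zc: "z \<in> (\<Pi>\<^sub>E i\<in>I. carrier (G i))"
      using grp_center_carrier[OF z] by simp
    have "z i \<in> grp_center (G i)" if i: "i \<in> I" for i
    proof (rule grp_center_memI)
      show "z i \<in> carrier (G i)" using zc i by auto
    next
      fix e assume e: "e \<in> carrier (G i)"
      define y where "y = (\<lambda>j\<in>I. if j = i then e else \<one>\<^bsub>G j\<^esub>)"
      have "y \<in> carrier (product_group I G)"
        using e assms by (auto simp: y_def group.is_monoid)
      then have "(z \<otimes>\<^bsub>product_group I G\<^esub> y) i = (y \<otimes>\<^bsub>product_group I G\<^esub> z) i"
        using grp_center_commute[OF z] by simp
      then show "z i \<otimes>\<^bsub>G i\<^esub> e = e \<otimes>\<^bsub>G i\<^esub> z i"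
        using i by (simp add: y_def)
    qed
    then show "z \<in> (\<Pi>\<^sub>E i\<in>I. grp_center (G i))"
      using zc by (simp add: PiE_iff)
  qed
next
  show "(\<Pi>\<^sub>E i\<in>I. grp_center (G i)) \<subseteq> grp_center (product_group I G)"
  proof
    fix z assume z: "z \<in> (\<Pi>\<^sub>E i\<in>I. grp_center (G i))"
    show "z \<in> grp_center (product_group I G)"
    proof (rule grp_center_memI)
      show "z \<in> carrier (product_group I G)"
        using z by (auto simp: PiE_iff intro: grp_center_carrier)
    next
      fix y assume "y \<in> carrier (product_group I G)"
      then show "z \<otimes>\<^bsub>product_group I G\<^esub> y = y \<otimes>\<^bsub>product_group I G\<^esub> z"
        using z by (auto simp: PiE_iff intro!: restrict_ext grp_center_commute)
    qed
  qed
qed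

lemma rcos_center_product_group_eq_iff:
  assumes G: "\<And>i. i \<in> I \<Longrightarrow> group (G i)"
    and x: "x \<in> carrier (product_group I G)" and y: "y \<in> carrier (product_group I G)"
  shows "grp_center (product_group I G) #>\<^bsub>product_group I G\<^esub> x
           = grp_center (product_group I G) #>\<^bsub>product_group I G\<^esub> y
         \<longleftrightarrow> (\<forall>i\<in>I. grp_center (G i) #>\<^bsub>G i\<^esub> x i = grp_center (G i) #>\<^bsub>G i\<^esub> y i)"
proof -
  interpret P: group "product_group I G" using G by simp
  have xy: "x i \<in> carrier (G i)" "y i \<in> carrier (G i)" if "i \<in> I" for i
    using x y that by auto
  have "grp_center (product_group I G) #>\<^bsub>product_group I G\<^esub> x
          = grp_center (product_group I G) #>\<^bsub>product_group I G\<^esub> y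
        \<longleftrightarrow> x \<otimes>\<^bsub>product_group I G\<^esub> inv\<^bsub>product_group I G\<^esub> y \<in> grp_center (product_group I G)"
    by (rule P.rcos_eq_iff_mult_inv_mem[OF P.subgroup_center x y])
  also have "\<dots> \<longleftrightarrow> (\<forall>i\<in>I. x i \<otimes>\<^bsub>G i\<^esub> inv\<^bsub>G i\<^esub> y i \<in> grp_center (G i))"
    using G y by (simp add: center_product_group Pi_iff)
  also have "\<dots> \<longleftrightarrow> (\<forall>i\<in>I. grp_center (G i) #>\<^bsub>G i\<^esub> x i = grp_center (G i) #>\<^bsub>G i\<^esub> y i)"
    using xy G group.rcos_eq_iff_mult_inv_mem[OF G group.subgroup_center[OF G]] by simp
  finally show ?thesis .
qed

lemma map_restrict_upt: "map (\<lambda>i\<in>{..<n}. f i) [0..<n] = map f [0..<n]"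
  by (rule map_cong) auto

lemma (in group_hom) hom_list_prod:
  "set xs \<subseteq> carrier G \<Longrightarrow> h (list_prod G xs) = list_prod H (map h xs)"
  by (induction xs) auto

lemma (in comm_monoid) list_prod_map_mult:
  assumes "\<And>j. j \<in> set js \<Longrightarrow> f j \<in> carrier G \<and> g j \<in> carrier G"
  shows "list_prod G (map (\<lambda>j. f j \<otimes> g j) js) = list_prod G (map f js) \<otimes> list_prod G (map g js)"
  using assms
proof (induction js)
  case (Cons j js)
  then have "f j \<in> carrier G" "g j \<in> carrier G"
    "list_prod G (map f js) \<in> carrier G" "list_prod G (map g js) \<in> carrier G"
    by (auto simp: image_subset_iff)
  with Cons show ?case
    by (simp add: m_ac)
qed simp

lemma (in comm_monoid) list_prod_rotate:
  "set xs \<subseteq> carrier G \<Longrightarrow> a \<in> carrier G \<Longrightarrow> list_prod G (a # xs) = list_prod G (xs @ [a])"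
  by (rule multlist_perm_cong) auto

lemma (in normal) rcos_list_prod:
  "set xs \<subseteq> carrier G \<Longrightarrow> H #> list_prod G xs = list_prod (G Mod H) (map (\<lambda>x. H #> x) xs)"
  using r_coset_hom_Mod factorgroup_is_group
  by (intro group_hom.hom_list_prod) (simp_all add: group_hom_def group_hom_axioms_def)

lemma (in normal) rcos_list_prod_map_mult:
  assumes "comm_group (G Mod H)" and fg: "\<And>j. j \<in> set js \<Longrightarrow> f j \<in> carrier G \<and> g j \<in> carrier G"
  shows "H #> list_prod G (map (\<lambda>j. f j \<otimes> g j) js) = H #> (list_prod G (map f js) \<otimes> list_prod G (map g js))"
proof -
  interpret Q: comm_group "G Mod H" by fact
  have "H #> list_prod G (map (\<lambda>j. f j \<otimes> g j) js)
      = list_prod (G Mod H) (map (\<lambda>x. H #> x) (map (\<lambda>j. f j \<otimes> g j) js))"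
    using fg by (intro rcos_list_prod) auto
  also have "map (\<lambda>x. H #> x) (map (\<lambda>j. f j \<otimes> g j) js) = map (\<lambda>j. (H #> f j) \<otimes>\<^bsub>G Mod H\<^esub> (H #> g j)) js"
    using fg by (auto simp: rcos_sum intro!: map_cong)
  also have "list_prod (G Mod H) \<dots> = list_prod (G Mod H) (map (\<lambda>j. H #> f j) js)
      \<otimes>\<^bsub>G Mod H\<^esub> list_prod (G Mod H) (map (\<lambda>j. H #> g j) js)"
    using fg by (intro Q.list_prod_map_mult) (simp add: carrier_FactGroup)
  also have "\<dots> = (H #> list_prod G (map f js)) \<otimes>\<^bsub>G Mod H\<^esub> (H #> list_prod G (map g js))"
  proof -
    have "set (map f js) \<subseteq> carrier G" "set (map g js) \<subseteq> carrier G"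
      using fg by auto
    then show ?thesis
      by (simp add: rcos_list_prod o_def del: mult_FactGroup)
  qed
  also have "\<dots> = H #> (list_prod G (map f js) \<otimes> list_prod G (map g js))"
    using fg by (simp add: rcos_sum image_subset_iff)
  finally show ?thesis .
qed

lemma (in normal) rcos_list_prod_rotate:
  assumes "comm_group (G Mod H)" and "set xs \<subseteq> carrier G" "a \<in> carrier G"
  shows "H #> list_prod G (a # xs) = H #> list_prod G (xs @ [a])"
proof -
  interpret Q: comm_group "G Mod H" by fact
  have "H #> list_prod G (a # xs) = list_prod (G Mod H) (map (\<lambda>x. H #> x) (a # xs))"
    using assms by (intro rcos_list_prod) auto
  also have "\<dots> = list_prod (G Mod H) (map (\<lambda>x. H #> x) (xs @ [a]))"
    using assms by (intro Q.multlist_perm_cong) (auto simp: carrier_FactGroup)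
  also have "\<dots> = H #> list_prod G (xs @ [a])"
    using assms by (intro rcos_list_prod[symmetric]) auto
  finally show ?thesis .
qed

section \<open>Semidirect products with a cyclic group\<close>

lemma carrier_semidirect_cyclic [simp]:
  "carrier (semidirect_cyclic K \<sigma> m) = carrier K \<times> {..<m}"
  by (simp add: semidirect_cyclic_def)

lemma mult_semidirect_cyclic [simp]:
  "(a, i) \<otimes>\<^bsub>semidirect_cyclic K \<sigma> m\<^esub> (b, j) = (a \<otimes>\<^bsub>K\<^esub> (\<sigma> ^^ i) b, (i + j) mod m)"
  by (simp add: semidirect_cyclic_def)

lemma one_semidirect_cyclic [simp]:
  "\<one>\<^bsub>semidirect_cyclic K \<sigma> m\<^esub> = (\<one>\<^bsub>K\<^esub>, 0)"
  by (simp add: semidirect_cyclic_def)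

locale cyclic_action = group K for K (structure) +
  fixes \<sigma> :: "'a \<Rightarrow> 'a" and m :: nat
  assumes order_pos: "0 < m"
    and action_hom: "\<sigma> \<in> hom K K"
    and action_period: "\<And>a. a \<in> carrier K \<Longrightarrow> (\<sigma> ^^ m) a = a"
begin

lemma funpow_action_hom: "\<sigma> ^^ i \<in> hom K K"
proof (induction i)
  case 0
  show ?case by (auto intro: homI)
next
  case (Suc i)
  then show ?case
    using Group.hom_compose[OF Suc action_hom] by (simp add: o_def)
qed

lemma funpow_action_closed [simp]: "a \<in> carrier K \<Longrightarrow> (\<sigma> ^^ i) a \<in> carrier K"
  by (rule hom_in_carrier[OF funpow_action_hom])

lemma funpow_action_mult:
  "a \<in> carrier K \<Longrightarrow> b \<in> carrier K \<Longrightarrow> (\<sigma> ^^ i) (a \<otimes> b) = (\<sigma> ^^ i) a \<otimes> (\<sigma> ^^ i) b"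
  using funpow_action_hom by (simp add: hom_mult)

lemma funpow_action_inv: "a \<in> carrier K \<Longrightarrow> (\<sigma> ^^ i) (inv a) = inv ((\<sigma> ^^ i) a)"
  using funpow_action_hom is_group by (simp add: group_hom_def group_hom_axioms_def group_hom.hom_inv)

lemma funpow_action_mod: "a \<in> carrier K \<Longrightarrow> (\<sigma> ^^ (i mod m)) a = (\<sigma> ^^ i) a"
proof -
  assume a: "a \<in> carrier K"
  have "(\<sigma> ^^ (q * m)) b = b" if "b \<in> carrier K" for q b
    using that by (induction q) (simp_all add: funpow_add action_period)
  moreover have "(\<sigma> ^^ i) a = (\<sigma> ^^ (i mod m + i div m * m)) a"
    by simp
  then have "(\<sigma> ^^ i) a = (\<sigma> ^^ (i mod m)) ((\<sigma> ^^ (i div m * m)) a)"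
    by (simp only: funpow_add o_apply)
  ultimately show ?thesis using a by simp
qed
lemma semidirect_cyclic_l_inv:
  assumes "a \<in> carrier K" "i < m"
  shows "((\<sigma> ^^ ((m - i) mod m)) (inv a), (m - i) mod m) \<otimes>\<^bsub>semidirect_cyclic K \<sigma> m\<^esub> (a, i)
           = \<one>\<^bsub>semidirect_cyclic K \<sigma> m\<^esub>"
proof -
  have "((m - i) mod m + i) mod m = 0"
    using assms(2) by (cases "i = 0") (simp_all add: less_imp_le)
  then show ?thesis
    using assms by (simp add: funpow_action_inv funpow_add[symmetric] funpow_action_mod)
qed

lemma group_semidirect_cyclic: "group (semidirect_cyclic K \<sigma> m)"
proof (rule groupI)
  fix x y z
  assume "x \<in> carrier (semidirect_cyclic K \<sigma> m)" "y \<in> carrier (semidirect_cyclic K \<sigma> m)"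
    "z \<in> carrier (semidirect_cyclic K \<sigma> m)"
  then obtain a i b j c k where x: "x = (a, i)" "a \<in> carrier K" and y: "y = (b, j)" "b \<in> carrier K"
    and z: "z = (c, k)" "c \<in> carrier K"
    by auto
  have "(\<sigma> ^^ ((i + j) mod m)) c = (\<sigma> ^^ i) ((\<sigma> ^^ j) c)"
    using z by (simp add: funpow_action_mod funpow_add)
  moreover have "((i + j) mod m + k) mod m = (i + (j + k) mod m) mod m"
    by (simp add: mod_add_left_eq mod_add_right_eq add.assoc)
  ultimately show "x \<otimes>\<^bsub>semidirect_cyclic K \<sigma> m\<^esub> y \<otimes>\<^bsub>semidirect_cyclic K \<sigma> m\<^esub> z
      = x \<otimes>\<^bsub>semidirect_cyclic K \<sigma> m\<^esub> (y \<otimes>\<^bsub>semidirect_cyclic K \<sigma> m\<^esub> z)"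
    using x y z by (simp add: funpow_action_mult m_assoc)
next
  fix x assume "x \<in> carrier (semidirect_cyclic K \<sigma> m)"
  then obtain a i where x: "x = (a, i)" "a \<in> carrier K" "i < m"
    by auto
  show "\<exists>y\<in>carrier (semidirect_cyclic K \<sigma> m). y \<otimes>\<^bsub>semidirect_cyclic K \<sigma> m\<^esub> x = \<one>\<^bsub>semidirect_cyclic K \<sigma> m\<^esub>"
    unfolding x(1) using semidirect_cyclic_l_inv[OF x(2,3)] x(2) order_pos
    by (intro bexI[of _ "((\<sigma> ^^ ((m - i) mod m)) (inv a), (m - i) mod m)"]) auto
qed (use order_pos in \<open>auto split: prod.splits\<close>)

lemma inv_semidirect_cyclic:
  assumes "a \<in> carrier K" "i < m"
  shows "inv\<^bsub>semidirect_cyclic K \<sigma> m\<^esub> (a, i) = ((\<sigma> ^^ ((m - i) mod m)) (inv a), (m - i) mod m)"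
  using assms order_pos semidirect_cyclic_l_inv
  by (intro group.inv_equality[OF group_semidirect_cyclic]) auto

end

locale cyclic_action_central = cyclic_action +
  fixes S :: "'a set"
  assumes subgroup_central: "subgroup S K"
    and central: "\<And>s a. s \<in> S \<Longrightarrow> a \<in> carrier K \<Longrightarrow> s \<otimes> a = a \<otimes> s"
    and action_invariant: "\<sigma> ` S \<subseteq> S"
begin

lemma funpow_action_central: "s \<in> S \<Longrightarrow> (\<sigma> ^^ i) s \<in> S"
  using action_invariant by (induction i) auto

lemma normal_central: "S \<lhd> K"
  by (rule normal_if_central[OF subgroup_central central])

lemma subgroup_semidirect_cyclic: "subgroup ((\<lambda>s. (s, 0::nat)) ` S) (semidirect_cyclic K \<sigma> m)"
proof (rule group.subgroupI[OF group_semidirect_cyclic])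
  interpret S: subgroup S K by (rule subgroup_central)
  show "(\<lambda>s. (s, 0::nat)) ` S \<subseteq> carrier (semidirect_cyclic K \<sigma> m)"
    using order_pos by auto
  show "(\<lambda>s. (s, 0::nat)) ` S \<noteq> {}"
    using S.one_closed by blast
  fix x assume "x \<in> (\<lambda>s. (s, 0::nat)) ` S"
  then obtain s where "x = (s, 0)" "s \<in> S" by blast
  then show "inv\<^bsub>semidirect_cyclic K \<sigma> m\<^esub> x \<in> (\<lambda>s. (s, 0::nat)) ` S"
    using order_pos by (simp add: inv_semidirect_cyclic)
next
  fix x y assume "x \<in> (\<lambda>s. (s, 0::nat)) ` S" "y \<in> (\<lambda>s. (s, 0::nat)) ` S"
  then show "x \<otimes>\<^bsub>semidirect_cyclic K \<sigma> m\<^esub> y \<in> (\<lambda>s. (s, 0::nat)) ` S"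
    using subgroup.m_closed[OF subgroup_central] by auto
qed

lemma semidirect_cyclic_conj:
  assumes a: "a \<in> carrier K" and i: "i < m" and s: "s \<in> S"
  shows "(a, i) \<otimes>\<^bsub>semidirect_cyclic K \<sigma> m\<^esub> (s, 0) \<otimes>\<^bsub>semidirect_cyclic K \<sigma> m\<^esub>
           inv\<^bsub>semidirect_cyclic K \<sigma> m\<^esub> (a, i) = ((\<sigma> ^^ i) s, 0)"
proof -
  define r where "r = (m - i) mod m"
  have r: "(i + r) mod m = 0"
    using i by (cases "i = 0") (simp_all add: r_def)
  have si: "(\<sigma> ^^ i) s \<in> carrier K"
    using subgroup.mem_carrier[OF subgroup_central funpow_action_central[OF s]] .
  have "(\<sigma> ^^ i) ((\<sigma> ^^ r) (inv a)) = (\<sigma> ^^ (i + r)) (inv a)"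
    by (simp add: funpow_add)
  also have "\<dots> = inv a"
    using a r funpow_action_mod[of "inv a" "i + r"] by simp
  finally have "(\<sigma> ^^ i) ((\<sigma> ^^ r) (inv a)) = inv a" .
  moreover have "a \<otimes> (\<sigma> ^^ i) s = (\<sigma> ^^ i) s \<otimes> a"
    using central[OF funpow_action_central[OF s] a] by simp
  then have "a \<otimes> (\<sigma> ^^ i) s \<otimes> inv a = (\<sigma> ^^ i) s"
    using a si by (simp add: m_assoc)
  ultimately show ?thesis
    using a i si r by (simp add: inv_semidirect_cyclic r_def[symmetric] subgroup.mem_carrier[OF subgroup_central s])
qed

lemma normal_semidirect_cyclic: "(\<lambda>s. (s, 0::nat)) ` S \<lhd> semidirect_cyclic K \<sigma> m"
  using subgroup_semidirect_cyclic semidirect_cyclic_conj funpow_action_central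
  by (auto simp: group.normal_inv_iff[OF group_semidirect_cyclic])

lemma rcos_action_cong:
  assumes "c \<in> carrier K" "d \<in> carrier K" "S #> c = S #> d"
  shows "S #> \<sigma> c = S #> \<sigma> d"
proof -
  interpret \<sigma>: group_hom K K \<sigma>
    by (intro group_hom.intro group_hom_axioms.intro is_group action_hom)
  have "c \<otimes> inv d \<in> S"
    using assms rcos_eq_iff_mult_inv_mem[OF subgroup_central] by simp
  then have "\<sigma> c \<otimes> inv (\<sigma> d) \<in> S"
    using assms action_invariant by (auto simp flip: \<sigma>.hom_inv \<sigma>.hom_mult)
  then show ?thesis
    using assms rcos_eq_iff_mult_inv_mem[OF subgroup_central] by simp
qed

lemma rcos_semidirect_cyclic_eq:
  assumes "c \<in> carrier K" "d \<in> carrier K" "i < m" "S #> c = S #> d"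
  shows "(\<lambda>s. (s, 0::nat)) ` S #>\<^bsub>semidirect_cyclic K \<sigma> m\<^esub> (c, i)
       = (\<lambda>s. (s, 0::nat)) ` S #>\<^bsub>semidirect_cyclic K \<sigma> m\<^esub> (d, i)"
proof -
  have "c \<otimes> inv d \<in> S"
    using assms rcos_eq_iff_mult_inv_mem[OF subgroup_central] by simp
  moreover have "(c, i) = (c \<otimes> inv d, 0) \<otimes>\<^bsub>semidirect_cyclic K \<sigma> m\<^esub> (d, i)"
    using assms by (simp add: m_assoc)
  ultimately have "(c, i) \<in> (\<lambda>s. (s, 0::nat)) ` S #>\<^bsub>semidirect_cyclic K \<sigma> m\<^esub> (d, i)"
    by (auto simp: r_coset_def)
  then show ?thesis
    using assms group.repr_independence[OF group_semidirect_cyclic _ _ subgroup_semidirect_cyclic]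
    by simp
qed

end

locale semidirect_cyclic_morphism =
  A: cyclic_action_central K \<sigma> m S + B: cyclic_action_central K' \<sigma>' m' S'
  for K :: "('a, 'b) monoid_scheme" and \<sigma> m S and K' :: "('c, 'd) monoid_scheme" and \<sigma>' m' S' +
  fixes g :: "'a \<Rightarrow> 'c"
  assumes order_dvd: "m' dvd m"
    and g_closed: "\<And>a. a \<in> carrier K \<Longrightarrow> g a \<in> carrier K'"
    and g_hom_Mod: "(\<lambda>a. S' #>\<^bsub>K'\<^esub> g a) \<in> hom K (K' Mod S')"
    and g_action: "\<And>a. a \<in> carrier K \<Longrightarrow> S' #>\<^bsub>K'\<^esub> g (\<sigma> a) = S' #>\<^bsub>K'\<^esub> \<sigma>' (g a)"
    and g_central: "g ` S \<subseteq> S'"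
begin

lemma rcos_g_funpow:
  "a \<in> carrier K \<Longrightarrow> S' #>\<^bsub>K'\<^esub> g ((\<sigma> ^^ i) a) = S' #>\<^bsub>K'\<^esub> (\<sigma>' ^^ i) (g a)"
proof (induction i)
  case (Suc i)
  then show ?case
    using g_action[of "(\<sigma> ^^ i) a"] B.rcos_action_cong g_closed by simp
qed simp

lemma rcos_g_mult:
  assumes a: "a \<in> carrier K" and b: "b \<in> carrier K"
  shows "S' #>\<^bsub>K'\<^esub> g (a \<otimes>\<^bsub>K\<^esub> (\<sigma> ^^ i) b) = S' #>\<^bsub>K'\<^esub> (g a \<otimes>\<^bsub>K'\<^esub> (\<sigma>' ^^ (i mod m')) (g b))"
proof -
  have "S' #>\<^bsub>K'\<^esub> g (a \<otimes>\<^bsub>K\<^esub> (\<sigma> ^^ i) b)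
      = (S' #>\<^bsub>K'\<^esub> g a) \<otimes>\<^bsub>K' Mod S'\<^esub> (S' #>\<^bsub>K'\<^esub> g ((\<sigma> ^^ i) b))"
    using hom_mult[OF g_hom_Mod a A.funpow_action_closed[OF b]] by simp
  also have "\<dots> = S' #>\<^bsub>K'\<^esub> (g a \<otimes>\<^bsub>K'\<^esub> (\<sigma>' ^^ (i mod m')) (g b))"
    using rcos_g_funpow[OF b] a b g_closed
    by (simp add: normal.rcos_sum[OF B.normal_central] B.funpow_action_mod)
  finally show ?thesis .
qed

definition semidirect_lift :: "'a \<times> nat \<Rightarrow> 'c \<times> nat" where
  "semidirect_lift = (\<lambda>(a, i). (g a, i mod m'))"

lemma semidirect_cyclic_hom_Mod:
  "(\<lambda>u. (\<lambda>s. (s, 0::nat)) ` S' #>\<^bsub>semidirect_cyclic K' \<sigma>' m'\<^esub> semidirect_lift u)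
     \<in> hom (semidirect_cyclic K \<sigma> m) (semidirect_cyclic K' \<sigma>' m' Mod (\<lambda>s. (s, 0::nat)) ` S')"
  (is "?coset \<in> hom ?J (?J' Mod ?N')")
proof (rule homI)
  fix u assume "u \<in> carrier ?J"
  then show "?coset u \<in> carrier (?J' Mod ?N')"
    using g_closed B.order_pos by (auto simp: carrier_FactGroup semidirect_lift_def)
next
  fix u v assume "u \<in> carrier ?J" "v \<in> carrier ?J"
  then obtain a i b j where u: "u = (a, i)" "a \<in> carrier K" and v: "v = (b, j)" "b \<in> carrier K"
    by auto
  have "(i + j) mod m mod m' = (i mod m' + j mod m') mod m'"
    using order_dvd by (simp add: mod_mod_cancel mod_add_eq)
  then have "?coset (u \<otimes>\<^bsub>?J\<^esub> v) = ?N' #>\<^bsub>?J'\<^esub> (semidirect_lift u \<otimes>\<^bsub>?J'\<^esub> semidirect_lift v)"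
    using u v g_closed B.order_pos rcos_g_mult[OF u(2) v(2)]
    by (simp add: semidirect_lift_def B.rcos_semidirect_cyclic_eq)
  also have "\<dots> = ?coset u \<otimes>\<^bsub>?J' Mod ?N'\<^esub> ?coset v"
    using u v g_closed B.order_pos
    by (simp add: semidirect_lift_def normal.rcos_sum[OF B.normal_semidirect_cyclic])
  finally show "?coset (u \<otimes>\<^bsub>?J\<^esub> v) = ?coset u \<otimes>\<^bsub>?J' Mod ?N'\<^esub> ?coset v" .
qed

lemma semidirect_cyclic_FactGroup_hom:
  "\<exists>h \<in> hom (semidirect_cyclic K \<sigma> m Mod (\<lambda>s. (s, 0::nat)) ` S)
            (semidirect_cyclic K' \<sigma>' m' Mod (\<lambda>s. (s, 0::nat)) ` S').
     \<forall>a \<in> carrier K. \<forall>i < m.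
       h ((\<lambda>s. (s, 0::nat)) ` S #>\<^bsub>semidirect_cyclic K \<sigma> m\<^esub> (a, i))
         = (\<lambda>s. (s, 0::nat)) ` S' #>\<^bsub>semidirect_cyclic K' \<sigma>' m'\<^esub> (g a, i mod m')"
proof -
  have "semidirect_lift ` (\<lambda>s. (s, 0::nat)) ` S \<subseteq> (\<lambda>s. (s, 0::nat)) ` S'"
    using g_central by (auto simp: semidirect_lift_def)
  from induced_FactGroup_hom[OF A.normal_semidirect_cyclic B.normal_semidirect_cyclic
      semidirect_cyclic_hom_Mod this]
  show ?thesis
    by (auto simp: semidirect_lift_def)
qed

end

section \<open>The groups \<open>E\<^sub>n\<close>, \<open>K\<^sub>n\<close> and \<open>J\<^sub>n\<close>\<close>

lemma funpow_image: "((\<lambda>B. (f :: 'a \<Rightarrow> 'a) ` B) ^^ k) B = (f ^^ k) ` B"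
  by (induction k) (simp_all add: image_comp)

locale wreath_central = group E for E (structure) +
  fixes p :: nat
  assumes abelian_central_quotient: "comm_group (E Mod grp_center E)"
    and p_pos: "0 < p"
begin

lemma p_power_pos: "0 < p ^ n"
  using p_pos by simp

lemma group_En: "group (En E p n)"
  unfolding En_def by simp

lemma carrier_En: "carrier (En E p n) = (\<Pi>\<^sub>E i\<in>{..<p ^ n}. carrier E)"
  by (simp add: En_def)

lemma En_apply_closed: "x \<in> carrier (En E p n) \<Longrightarrow> i < p ^ n \<Longrightarrow> x i \<in> carrier E"
  by (auto simp: carrier_En)

lemma mult_En: "x \<otimes>\<^bsub>En E p n\<^esub> y = (\<lambda>i\<in>{..<p ^ n}. x i \<otimes> y i)"
  by (simp add: En_def)

lemma Zn_eq: "Zn E p n = (\<Pi>\<^sub>E i\<in>{..<p ^ n}. grp_center E)"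
  unfolding Zn_def En_def by (simp add: center_product_group)

lemma normal_Zn: "Zn E p n \<lhd> En E p n"
  unfolding Zn_def by (rule group.normal_center[OF group_En])

lemma subgroup_Zn: "subgroup (Zn E p n) (En E p n)"
  using normal_Zn by (rule normal_imp_subgroup)

lemma rcos_Zn_eq_iff:
  "x \<in> carrier (En E p n) \<Longrightarrow> y \<in> carrier (En E p n) \<Longrightarrow>
   Zn E p n #>\<^bsub>En E p n\<^esub> x = Zn E p n #>\<^bsub>En E p n\<^esub> y
   \<longleftrightarrow> (\<forall>i < p ^ n. grp_center E #> x i = grp_center E #> y i)"
  unfolding Zn_def En_def by (auto simp: rcos_center_product_group_eq_iff)

lemma coordinate_product_hom:
  "(\<lambda>z. list_prod E (map z [0..<p ^ n]))
     \<in> hom ((En E p n)\<lparr>carrier := Zn E p n\<rparr>) (E\<lparr>carrier := grp_center E\<rparr>)"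
proof (rule homI)
  interpret C: comm_group "E\<lparr>carrier := grp_center E\<rparr>" by (rule comm_group_center)
  fix z w assume "z \<in> carrier ((En E p n)\<lparr>carrier := Zn E p n\<rparr>)"
    "w \<in> carrier ((En E p n)\<lparr>carrier := Zn E p n\<rparr>)"
  then have z: "\<And>i. i < p ^ n \<Longrightarrow> z i \<in> grp_center E" and w: "\<And>i. i < p ^ n \<Longrightarrow> w i \<in> grp_center E"
    by (auto simp: Zn_eq)
  show "list_prod E (map z [0..<p ^ n]) \<in> carrier (E\<lparr>carrier := grp_center E\<rparr>)"
    using C.multlist_closed[of "map z [0..<p ^ n]"] z by (auto simp: image_subset_iff)
  have "list_prod E (map (z \<otimes>\<^bsub>En E p n\<^esub> w) [0..<p ^ n]) = list_prod E (map (\<lambda>i. z i \<otimes> w i) [0..<p ^ n])"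
    by (simp add: mult_En map_restrict_upt)
  also have "\<dots> = list_prod E (map z [0..<p ^ n]) \<otimes> list_prod E (map w [0..<p ^ n])"
    using C.list_prod_map_mult[of "[0..<p ^ n]" z w] z w by simp
  finally show "list_prod E (map (z \<otimes>\<^bsub>(En E p n)\<lparr>carrier := Zn E p n\<rparr>\<^esub> w) [0..<p ^ n])
      = list_prod E (map z [0..<p ^ n]) \<otimes>\<^bsub>E\<lparr>carrier := grp_center E\<rparr>\<^esub> list_prod E (map w [0..<p ^ n])"
    by simp
qed

lemma Fn_eq_kernel:
  "Fn E p n = kernel ((En E p n)\<lparr>carrier := Zn E p n\<rparr>) (E\<lparr>carrier := grp_center E\<rparr>)
                (\<lambda>z. list_prod E (map z [0..<p ^ n]))"
  by (simp add: Fn_def kernel_def)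

lemma subgroup_Fn: "subgroup (Fn E p n) (En E p n)"
proof -
  interpret Z: group "(En E p n)\<lparr>carrier := Zn E p n\<rparr>"
    by (rule group.subgroup_imp_group[OF group_En subgroup_Zn])
  interpret C: group "E\<lparr>carrier := grp_center E\<rparr>"
    by (rule subgroup_imp_group[OF subgroup_center])
  interpret group_hom "(En E p n)\<lparr>carrier := Zn E p n\<rparr>" "E\<lparr>carrier := grp_center E\<rparr>"
    "\<lambda>z. list_prod E (map z [0..<p ^ n])"
    using coordinate_product_hom by unfold_locales
  show ?thesis
    unfolding Fn_eq_kernel by (rule group.incl_subgroup[OF group_En subgroup_Zn subgroup_kernel])
qed

lemma Fn_subset_Zn: "Fn E p n \<subseteq> Zn E p n"
  by (auto simp: Fn_def)

lemma normal_Fn: "Fn E p n \<lhd> En E p n"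
  using Fn_subset_Zn[of n] grp_center_commute[of _ "En E p n"]
  by (intro group.normal_if_central[OF group_En subgroup_Fn]) (auto simp: Zn_def)

lemma shift_index_less: "i < p ^ n \<Longrightarrow> (i + p ^ n - 1) mod p ^ n < p ^ n"
  using p_power_pos by simp

lemma shift_apply:
  "r < p ^ n \<Longrightarrow> shift p n y r = (if r = 0 then y (p ^ n - 1) else y (r - 1))"
proof -
  assume r: "r < p ^ n"
  obtain N where N: "p ^ n = Suc N" using p_power_pos[of n] gr0_implies_Suc by blast
  show ?thesis
  proof (cases r)
    case (Suc r')
    then have "(r + p ^ n - 1) mod p ^ n = (r' + p ^ n) mod p ^ n"
      by (simp add: N)
    also have "\<dots> = r'"
      using r Suc by (simp only: mod_add_self2) simp
    finally show ?thesis
      using r Suc by (simp add: shift_def)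
  qed (use r N in \<open>simp add: shift_def\<close>)
qed

lemma shift_hom: "shift p n \<in> hom (En E p n) (En E p n)"
proof (rule homI)
  fix x assume "x \<in> carrier (En E p n)"
  then show "shift p n x \<in> carrier (En E p n)"
    using shift_index_less by (auto simp: shift_def carrier_En)
next
  fix x y assume "x \<in> carrier (En E p n)" "y \<in> carrier (En E p n)"
  then show "shift p n (x \<otimes>\<^bsub>En E p n\<^esub> y) = shift p n x \<otimes>\<^bsub>En E p n\<^esub> shift p n y"
    using shift_index_less by (auto simp: shift_def mult_En intro!: restrict_ext)
qed

lemma shift_closed: "x \<in> carrier (En E p n) \<Longrightarrow> shift p n x \<in> carrier (En E p n)"
  by (rule hom_in_carrier[OF shift_hom])

lemma shift_Zn: "z \<in> Zn E p n \<Longrightarrow> shift p n z \<in> Zn E p n"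
  using shift_index_less by (auto simp: shift_def Zn_eq)

lemma rcos_Zn_shift:
  assumes "x \<in> carrier (En E p n)" "y \<in> carrier (En E p n)"
    and "Zn E p n #>\<^bsub>En E p n\<^esub> x = Zn E p n #>\<^bsub>En E p n\<^esub> y"
  shows "Zn E p n #>\<^bsub>En E p n\<^esub> shift p n x = Zn E p n #>\<^bsub>En E p n\<^esub> shift p n y"
  using assms shift_index_less by (simp add: rcos_Zn_eq_iff shift_closed) (simp add: shift_def)

lemma funpow_shift:
  assumes "x \<in> carrier (En E p n)"
  shows "(shift p n ^^ k) x = (\<lambda>i\<in>{..<p ^ n}. x ((i + k * (p ^ n - 1)) mod p ^ n))"
proof (induction k)
  case 0
  show ?case
    using assms by (auto simp: carrier_En PiE_iff extensional_def)
next
  case (Suc k)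
  obtain N where N: "p ^ n = Suc N" using p_power_pos[of n] gr0_implies_Suc by blast
  have "((i + N) mod Suc N + k * N) mod Suc N = (i + Suc k * N) mod Suc N" for i
    by (simp add: mod_add_left_eq add.assoc)
  then show ?case
    using Suc shift_index_less by (auto simp: shift_def N intro!: restrict_ext)
qed

lemma funpow_shift_period: "x \<in> carrier (En E p n) \<Longrightarrow> (shift p n ^^ p ^ n) x = x"
  by (auto simp: funpow_shift carrier_En PiE_iff extensional_def)

lemma map_shift_upt:
  "map (shift p n x) [0..<p ^ n] = x (p ^ n - 1) # map x [0..<p ^ n - 1]"
proof -
  obtain N where N: "p ^ n = Suc N" using p_power_pos[of n] gr0_implies_Suc by blast
  have "shift p n x (Suc j) = x j" if "j < N" for j
    using that by (simp add: shift_apply N)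
  moreover have "shift p n x 0 = x N"
    by (simp add: shift_apply N)
  ultimately show ?thesis
    by (simp add: N upt_conv_Cons map_Suc_upt[symmetric] del: upt_Suc)
qed

lemma shift_Fn: "f \<in> Fn E p n \<Longrightarrow> shift p n f \<in> Fn E p n"
proof -
  interpret C: comm_group "E\<lparr>carrier := grp_center E\<rparr>" by (rule comm_group_center)
  assume f: "f \<in> Fn E p n"
  then have fZ: "f \<in> Zn E p n" and f1: "list_prod E (map f [0..<p ^ n]) = \<one>"
    by (auto simp: Fn_def)
  have central: "f i \<in> grp_center E" if "i < p ^ n" for i
    using fZ that by (auto simp: Zn_eq)
  obtain N where N: "p ^ n = Suc N" using p_power_pos[of n] gr0_implies_Suc by blast
  have "list_prod E (map (shift p n f) [0..<p ^ n]) = list_prod E (f N # map f [0..<N])"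
    by (simp only: map_shift_upt) (simp add: N)
  also have "\<dots> = list_prod E (map f [0..<N] @ [f N])"
    using C.list_prod_rotate[of "map f [0..<N]" "f N"] central by (simp add: N image_subset_iff)
  also have "\<dots> = \<one>"
    using f1 by (simp add: N)
  finally show ?thesis
    using shift_Zn[OF fZ] by (simp add: Fn_def)
qed

lemma image_shift_Fn: "shift p n ` Fn E p n = Fn E p n"
proof
  show "shift p n ` Fn E p n \<subseteq> Fn E p n"
    using shift_Fn by blast
next
  have "f \<in> shift p n ` Fn E p n" if f: "f \<in> Fn E p n" for f
  proof -
    have "(shift p n ^^ k) f \<in> Fn E p n" for k
      using f shift_Fn by (induction k) auto
    moreover have "shift p n ((shift p n ^^ (p ^ n - 1)) f) = f"
      using funpow_shift_period[of f] f p_power_pos[of n] subgroup.mem_carrier[OF subgroup_Fn]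
      by (metis Suc_diff_1 funpow.simps(2) o_apply)
    ultimately show ?thesis by (metis image_eqI)
  qed
  then show "Fn E p n \<subseteq> shift p n ` Fn E p n" by blast
qed

lemma group_Kn: "group (Kn E p n)"
  unfolding Kn_def by (rule normal.factorgroup_is_group[OF normal_Fn])

lemma carrier_Kn: "carrier (Kn E p n) = (\<lambda>x. Fn E p n #>\<^bsub>En E p n\<^esub> x) ` carrier (En E p n)"
  by (simp add: Kn_def carrier_FactGroup)

lemma Fn_rcos_hom: "(\<lambda>x. Fn E p n #>\<^bsub>En E p n\<^esub> x) \<in> hom (En E p n) (Kn E p n)"
  unfolding Kn_def by (rule normal.r_coset_hom_Mod[OF normal_Fn])

lemma rcos_Fn_mult:
  "x \<in> carrier (En E p n) \<Longrightarrow> y \<in> carrier (En E p n) \<Longrightarrow>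
   (Fn E p n #>\<^bsub>En E p n\<^esub> x) \<otimes>\<^bsub>Kn E p n\<^esub> (Fn E p n #>\<^bsub>En E p n\<^esub> y)
     = Fn E p n #>\<^bsub>En E p n\<^esub> (x \<otimes>\<^bsub>En E p n\<^esub> y)"
  by (simp add: Kn_def normal.rcos_sum[OF normal_Fn])

lemma shift_rcos_Fn:
  "x \<in> carrier (En E p n) \<Longrightarrow> shift p n ` (Fn E p n #>\<^bsub>En E p n\<^esub> x) = Fn E p n #>\<^bsub>En E p n\<^esub> shift p n x"
  using image_rcos_hom[OF shift_hom subgroup.subset[OF subgroup_Fn]] by (simp add: image_shift_Fn)

(* The paper's L_n = Z_n/F_n as a subgroup of K_n; Ln is its image in J_n. *)

definition Ln_in_Kn :: "nat \<Rightarrow> (nat \<Rightarrow> 'a) set set" where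
  "Ln_in_Kn n = (\<lambda>z. Fn E p n #>\<^bsub>En E p n\<^esub> z) ` Zn E p n"

lemma Ln_eq: "Ln E p n = (\<lambda>s. (s, 0)) ` Ln_in_Kn n"
  by (simp add: Ln_def Ln_in_Kn_def inK_def image_image)

lemma shift_image_hom_Kn: "(\<lambda>B. shift p n ` B) \<in> hom (Kn E p n) (Kn E p n)"
proof (rule homI)
  fix B assume "B \<in> carrier (Kn E p n)"
  then show "shift p n ` B \<in> carrier (Kn E p n)"
    by (auto simp: carrier_Kn shift_rcos_Fn shift_closed)
next
  fix B C assume "B \<in> carrier (Kn E p n)" "C \<in> carrier (Kn E p n)"
  then obtain x y where x: "x \<in> carrier (En E p n)" "B = Fn E p n #>\<^bsub>En E p n\<^esub> x"
    and y: "y \<in> carrier (En E p n)" "C = Fn E p n #>\<^bsub>En E p n\<^esub> y"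
    by (auto simp: carrier_Kn)
  moreover have "x \<otimes>\<^bsub>En E p n\<^esub> y \<in> carrier (En E p n)"
    by (rule monoid.m_closed[OF group.is_monoid[OF group_En] x(1) y(1)])
  ultimately show "shift p n ` (B \<otimes>\<^bsub>Kn E p n\<^esub> C) = shift p n ` B \<otimes>\<^bsub>Kn E p n\<^esub> shift p n ` C"
    by (simp add: rcos_Fn_mult shift_rcos_Fn shift_closed hom_mult[OF shift_hom])
qed

lemma funpow_shift_image_period:
  assumes "B \<in> carrier (Kn E p n)"
  shows "((\<lambda>B. shift p n ` B) ^^ p ^ n) B = B"
proof -
  obtain x where "x \<in> carrier (En E p n)" "B = Fn E p n #>\<^bsub>En E p n\<^esub> x"
    using assms by (auto simp: carrier_Kn)
  then have "B \<subseteq> carrier (En E p n)"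
    using monoid.r_coset_subset_G[OF group.is_monoid[OF group_En] subgroup.subset[OF subgroup_Fn]] by simp
  then show ?thesis
    by (auto simp: funpow_image funpow_shift_period subset_iff intro: rev_image_eqI)
qed

lemma subgroup_Ln_in_Kn: "subgroup (Ln_in_Kn n) (Kn E p n)"
proof -
  interpret group_hom "En E p n" "Kn E p n" "\<lambda>x. Fn E p n #>\<^bsub>En E p n\<^esub> x"
    by (intro group_hom.intro group_hom_axioms.intro group_En group_Kn Fn_rcos_hom)
  show ?thesis
    unfolding Ln_in_Kn_def by (rule subgroup_img_is_subgroup[OF subgroup_Zn])
qed

lemma Ln_in_Kn_central:
  assumes "s \<in> Ln_in_Kn n" "B \<in> carrier (Kn E p n)"
  shows "s \<otimes>\<^bsub>Kn E p n\<^esub> B = B \<otimes>\<^bsub>Kn E p n\<^esub> s"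
proof -
  obtain z x where z: "z \<in> Zn E p n" "s = Fn E p n #>\<^bsub>En E p n\<^esub> z"
    and x: "x \<in> carrier (En E p n)" "B = Fn E p n #>\<^bsub>En E p n\<^esub> x"
    using assms by (auto simp: Ln_in_Kn_def carrier_Kn)
  then show ?thesis
    using grp_center_commute[of z "En E p n" x] subgroup.mem_carrier[OF subgroup_Zn]
    by (simp add: rcos_Fn_mult Zn_def)
qed

lemma shift_image_Ln_in_Kn: "(\<lambda>B. shift p n ` B) ` Ln_in_Kn n \<subseteq> Ln_in_Kn n"
  using subgroup.mem_carrier[OF subgroup_Zn]
  by (auto simp: Ln_in_Kn_def shift_rcos_Fn shift_Zn)

lemma cyclic_action_central_Kn:
  "cyclic_action_central (Kn E p n) (\<lambda>B. shift p n ` B) (p ^ n) (Ln_in_Kn n)"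
  by (intro cyclic_action_central.intro cyclic_action.intro cyclic_action_axioms.intro
      cyclic_action_central_axioms.intro;
      rule group_Kn p_power_pos shift_image_hom_Kn funpow_shift_image_period
        subgroup_Ln_in_Kn Ln_in_Kn_central shift_image_Ln_in_Kn)

lemma normal_Ln_in_Kn: "Ln_in_Kn n \<lhd> Kn E p n"
  by (rule cyclic_action_central.normal_central[OF cyclic_action_central_Kn])

lemma rcos_Ln_in_Kn_eqI:
  "x \<in> carrier (En E p n) \<Longrightarrow> y \<in> carrier (En E p n) \<Longrightarrow>
   Zn E p n #>\<^bsub>En E p n\<^esub> x = Zn E p n #>\<^bsub>En E p n\<^esub> y \<Longrightarrow>
   Ln_in_Kn n #>\<^bsub>Kn E p n\<^esub> (Fn E p n #>\<^bsub>En E p n\<^esub> x) = Ln_in_Kn n #>\<^bsub>Kn E p n\<^esub> (Fn E p n #>\<^bsub>En E p n\<^esub> y)"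
  unfolding Kn_def Ln_in_Kn_def by (rule rcos_FactGroup_image_eqI[OF normal_Fn subgroup_Zn Fn_subset_Zn])

lemma rcos_Ln_eq:
  assumes "B \<in> carrier (Kn E p n)" "C \<in> carrier (Kn E p n)" "i < p ^ n"
    and "Ln_in_Kn n #>\<^bsub>Kn E p n\<^esub> B = Ln_in_Kn n #>\<^bsub>Kn E p n\<^esub> C"
  shows "Ln E p n #>\<^bsub>Jn E p n\<^esub> (B, i) = Ln E p n #>\<^bsub>Jn E p n\<^esub> (C, i)"
  unfolding Jn_def Ln_eq
  by (rule cyclic_action_central.rcos_semidirect_cyclic_eq[OF cyclic_action_central_Kn assms])

lemma Fn_in_Ln_in_Kn: "Fn E p n \<in> Ln_in_Kn n"
  using group.coset_mult_one[OF group_En subgroup.subset[OF subgroup_Fn]]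
    subgroup.one_closed[OF subgroup_Zn]
  by (force simp: Ln_in_Kn_def)

section \<open>The maps \<open>\<phi>\<^sub>n\<close>\<close>

lemma phi_index: "i < p ^ k \<Longrightarrow> j < p \<Longrightarrow> i + j * p ^ k < p ^ Suc k"
proof -
  assume "i < p ^ k" "j < p"
  then have "i + j * p ^ k < Suc j * p ^ k" by simp
  also have "\<dots> \<le> p * p ^ k" using \<open>j < p\<close> by (intro mult_le_mono1) simp
  finally show ?thesis by simp
qed

lemma phi_apply:
  "i < p ^ k \<Longrightarrow> phi E p (Suc k) x i = list_prod E (map (\<lambda>j. x (i + j * p ^ k)) [0..<p])"
  by (simp add: phi_def)

lemma phi_closed: "x \<in> carrier (En E p (Suc k)) \<Longrightarrow> phi E p (Suc k) x \<in> carrier (En E p k)"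
  using phi_index by (auto simp: phi_def carrier_En PiE_iff image_subset_iff)

lemma phi_Zn: "z \<in> Zn E p (Suc k) \<Longrightarrow> phi E p (Suc k) z \<in> Zn E p k"
proof -
  interpret C: comm_group "E\<lparr>carrier := grp_center E\<rparr>" by (rule comm_group_center)
  assume "z \<in> Zn E p (Suc k)"
  then show ?thesis
    using phi_index C.multlist_closed
    by (auto simp: phi_def Zn_eq PiE_iff image_subset_iff)
qed

lemma rcos_phi_mult:
  assumes x: "x \<in> carrier (En E p (Suc k))" and y: "y \<in> carrier (En E p (Suc k))"
  shows "Zn E p k #>\<^bsub>En E p k\<^esub> phi E p (Suc k) (x \<otimes>\<^bsub>En E p (Suc k)\<^esub> y)
       = Zn E p k #>\<^bsub>En E p k\<^esub> (phi E p (Suc k) x \<otimes>\<^bsub>En E p k\<^esub> phi E p (Suc k) y)"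
proof -
  interpret Z: normal "grp_center E" E by (rule normal_center)
  have xy: "x (i + j * p ^ k) \<in> carrier E \<and> y (i + j * p ^ k) \<in> carrier E"
    if "i < p ^ k" "j < p" for i j
    using x y phi_index[OF that] by (auto simp: carrier_En)
  have "phi E p (Suc k) x \<otimes>\<^bsub>En E p k\<^esub> phi E p (Suc k) y \<in> carrier (En E p k)"
    by (rule monoid.m_closed[OF group.is_monoid[OF group_En] phi_closed[OF x] phi_closed[OF y]])
  moreover have "phi E p (Suc k) (x \<otimes>\<^bsub>En E p (Suc k)\<^esub> y) \<in> carrier (En E p k)"
    by (rule phi_closed[OF monoid.m_closed[OF group.is_monoid[OF group_En] x y]])
  moreover have "grp_center E #> phi E p (Suc k) (x \<otimes>\<^bsub>En E p (Suc k)\<^esub> y) i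
      = grp_center E #> (phi E p (Suc k) x \<otimes>\<^bsub>En E p k\<^esub> phi E p (Suc k) y) i"
    if i: "i < p ^ k" for i
  proof -
    have "map (\<lambda>j. (x \<otimes>\<^bsub>En E p (Suc k)\<^esub> y) (i + j * p ^ k)) [0..<p]
        = map (\<lambda>j. x (i + j * p ^ k) \<otimes> y (i + j * p ^ k)) [0..<p]"
      by (rule map_cong) (use phi_index[OF i] in \<open>auto simp: mult_En\<close>)
    then have "grp_center E #> phi E p (Suc k) (x \<otimes>\<^bsub>En E p (Suc k)\<^esub> y) i
        = grp_center E #> list_prod E (map (\<lambda>j. x (i + j * p ^ k) \<otimes> y (i + j * p ^ k)) [0..<p])"
      using i by (simp only: phi_apply)
    also have "\<dots> = grp_center E #> (list_prod E (map (\<lambda>j. x (i + j * p ^ k)) [0..<p])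
                                      \<otimes> list_prod E (map (\<lambda>j. y (i + j * p ^ k)) [0..<p]))"
      by (rule Z.rcos_list_prod_map_mult[OF abelian_central_quotient]) (use xy i in auto)
    also have "\<dots> = grp_center E #> (phi E p (Suc k) x \<otimes>\<^bsub>En E p k\<^esub> phi E p (Suc k) y) i"
      using i by (simp add: mult_En phi_apply)
    finally show ?thesis .
  qed
  ultimately show ?thesis
    by (simp add: rcos_Zn_eq_iff)
qed

lemma phi_hom_Mod_Zn:
  "(\<lambda>x. Zn E p k #>\<^bsub>En E p k\<^esub> phi E p (Suc k) x) \<in> hom (En E p (Suc k)) (En E p k Mod Zn E p k)"
proof (rule homI)
  fix x assume "x \<in> carrier (En E p (Suc k))"
  then show "Zn E p k #>\<^bsub>En E p k\<^esub> phi E p (Suc k) x \<in> carrier (En E p k Mod Zn E p k)"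
    by (simp add: carrier_FactGroup phi_closed)
next
  fix x y assume "x \<in> carrier (En E p (Suc k))" "y \<in> carrier (En E p (Suc k))"
  then show "Zn E p k #>\<^bsub>En E p k\<^esub> phi E p (Suc k) (x \<otimes>\<^bsub>En E p (Suc k)\<^esub> y)
      = (Zn E p k #>\<^bsub>En E p k\<^esub> phi E p (Suc k) x) \<otimes>\<^bsub>En E p k Mod Zn E p k\<^esub>
        (Zn E p k #>\<^bsub>En E p k\<^esub> phi E p (Suc k) y)"
    by (simp add: rcos_phi_mult normal.rcos_sum[OF normal_Zn] phi_closed)
qed

lemma En_Mod_Zn_hom:
  "\<exists>\<psi> \<in> hom (En E p (Suc k) Mod Zn E p (Suc k)) (En E p k Mod Zn E p k).
     \<forall>x \<in> carrier (En E p (Suc k)).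
       \<psi> (Zn E p (Suc k) #>\<^bsub>En E p (Suc k)\<^esub> x) = Zn E p k #>\<^bsub>En E p k\<^esub> phi E p (Suc k) x"
  by (rule induced_FactGroup_hom[OF normal_Zn normal_Zn phi_hom_Mod_Zn]) (use phi_Zn in blast)

lemma phi_shift_apply:
  assumes "0 < i" "i < p ^ k"
  shows "phi E p (Suc k) (shift p (Suc k) y) i = shift p k (phi E p (Suc k) y) i"
proof -
  have shifted: "map (\<lambda>j. shift p (Suc k) y (i + j * p ^ k)) [0..<p] = map (\<lambda>j. y (i - 1 + j * p ^ k)) [0..<p]"
    using assms phi_index[of i k] by (intro map_cong) (auto simp: shift_apply)
  have "phi E p (Suc k) (shift p (Suc k) y) i = list_prod E (map (\<lambda>j. shift p (Suc k) y (i + j * p ^ k)) [0..<p])"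
    using assms by (simp add: phi_apply)
  also have "\<dots> = list_prod E (map (\<lambda>j. y (i - 1 + j * p ^ k)) [0..<p])"
    unfolding shifted ..
  also have "\<dots> = shift p k (phi E p (Suc k) y) i"
    using assms by (simp add: phi_apply shift_apply)
  finally show ?thesis .
qed

lemma phi_shift_apply_0:
  "phi E p (Suc k) (shift p (Suc k) y) 0
     = list_prod E (y (p ^ Suc k - 1) # map (\<lambda>j. y (p ^ k - 1 + j * p ^ k)) [0..<p - 1])"
proof -
  define M where "M = p ^ k"
  have M: "0 < M" using p_power_pos by (simp add: M_def)
  obtain q where q: "p = Suc q" using p_pos gr0_implies_Suc by blast
  have "shift p (Suc k) y (Suc j * M) = y (M - 1 + j * M)" if "j < q" for j
  proof -
    have "Suc j * M < p * M" using that q M by simp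
    moreover have "Suc j * M - 1 = M - 1 + j * M" using M by simp
    ultimately show ?thesis using M p_pos by (simp add: shift_apply M_def)
  qed
  moreover have "shift p (Suc k) y 0 = y (p * M - 1)"
    using p_power_pos[of "Suc k"] by (simp add: shift_apply M_def)
  ultimately have "map (\<lambda>j. shift p (Suc k) y (j * M)) [0..<p]
      = y (p * M - 1) # map (\<lambda>j. y (M - 1 + j * M)) [0..<p - 1]"
    by (simp add: q upt_conv_Cons map_Suc_upt[symmetric] del: upt_Suc)
  then show ?thesis
    using M by (simp add: phi_apply M_def)
qed

lemma shift_phi_apply_0:
  "shift p k (phi E p (Suc k) y) 0
     = list_prod E (map (\<lambda>j. y (p ^ k - 1 + j * p ^ k)) [0..<p - 1] @ [y (p ^ Suc k - 1)])"
proof -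
  obtain q where q: "p = Suc q" using p_pos gr0_implies_Suc by blast
  have "shift p k (phi E p (Suc k) y) 0 = list_prod E (map (\<lambda>j. y (p ^ k - 1 + j * p ^ k)) [0..<p])"
    using p_power_pos[of k] by (simp add: shift_apply phi_apply)
  moreover have "map (\<lambda>j. y (p ^ k - 1 + j * p ^ k)) [0..<p]
      = map (\<lambda>j. y (p ^ k - 1 + j * p ^ k)) [0..<p - 1] @ [y (p ^ Suc k - 1)]"
    using p_power_pos[of k] by (simp add: q)
  ultimately show ?thesis
    by simp
qed

lemma rcos_phi_shift:
  assumes y: "y \<in> carrier (En E p (Suc k))"
  shows "Zn E p k #>\<^bsub>En E p k\<^esub> phi E p (Suc k) (shift p (Suc k) y)
       = Zn E p k #>\<^bsub>En E p k\<^esub> shift p k (phi E p (Suc k) y)"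
proof -
  have block: "y (p ^ k - 1 + j * p ^ k) \<in> carrier E" if "j < p - 1" for j
  proof (rule En_apply_closed[OF y], rule phi_index)
    show "p ^ k - 1 < p ^ k" "j < p" using p_power_pos[of k] that by simp_all
  qed
  have last: "y (p ^ Suc k - 1) \<in> carrier E"
    using p_power_pos[of "Suc k"] by (intro En_apply_closed[OF y]) simp
  have zero: "grp_center E #> phi E p (Suc k) (shift p (Suc k) y) 0
      = grp_center E #> shift p k (phi E p (Suc k) y) 0"
    unfolding phi_shift_apply_0 shift_phi_apply_0
    using block last by (intro normal.rcos_list_prod_rotate[OF normal_center abelian_central_quotient]) auto
  have "grp_center E #> phi E p (Suc k) (shift p (Suc k) y) i
      = grp_center E #> shift p k (phi E p (Suc k) y) i" if "i < p ^ k" for i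
  proof (cases "i = 0")
    case True
    then show ?thesis using zero by simp
  next
    case False
    then show ?thesis using that by (simp add: phi_shift_apply)
  qed
  moreover have "phi E p (Suc k) (shift p (Suc k) y) \<in> carrier (En E p k)"
    "shift p k (phi E p (Suc k) y) \<in> carrier (En E p k)"
    using y by (simp_all add: phi_closed shift_closed)
  ultimately show ?thesis
    by (simp add: rcos_Zn_eq_iff)
qed

(* phi_n on K_n = E_n/F_n, evaluated at a representative chosen by SOME; modulo Z_(n-1) the
   choice does not matter (lemma rcos_Zn_phi_some). *)

definition phi_Kn :: "nat \<Rightarrow> (nat \<Rightarrow> 'a) set \<Rightarrow> (nat \<Rightarrow> 'a) set" where
  "phi_Kn k B = Fn E p k #>\<^bsub>En E p k\<^esub> phi E p (Suc k) (SOME x. x \<in> B)"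

lemma some_in_rcos_Fn:
  assumes x: "x \<in> carrier (En E p n)"
  shows "(SOME y. y \<in> Fn E p n #>\<^bsub>En E p n\<^esub> x) \<in> Fn E p n #>\<^bsub>En E p n\<^esub> x"
proof -
  have "x \<in> Fn E p n #>\<^bsub>En E p n\<^esub> x"
    using x by (rule group.rcos_self[OF group_En _ subgroup_Fn])
  then show ?thesis
    by (rule someI[where P = "\<lambda>y. y \<in> Fn E p n #>\<^bsub>En E p n\<^esub> x"])
qed

lemma some_rcos_Fn_closed:
  "x \<in> carrier (En E p n) \<Longrightarrow> (SOME y. y \<in> Fn E p n #>\<^bsub>En E p n\<^esub> x) \<in> carrier (En E p n)"
  using some_in_rcos_Fn monoid.r_coset_subset_G[OF group.is_monoid[OF group_En] subgroup.subset[OF subgroup_Fn]]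
  by blast

lemma rcos_Zn_phi_some:
  assumes x: "x \<in> carrier (En E p (Suc k))"
  shows "Zn E p k #>\<^bsub>En E p k\<^esub> phi E p (Suc k) (SOME y. y \<in> Fn E p (Suc k) #>\<^bsub>En E p (Suc k)\<^esub> x)
       = Zn E p k #>\<^bsub>En E p k\<^esub> phi E p (Suc k) x"
proof -
  interpret Zk: normal "Zn E p k" "En E p k" by (rule normal_Zn)
  obtain f where f: "f \<in> Fn E p (Suc k)"
    and some: "(SOME y. y \<in> Fn E p (Suc k) #>\<^bsub>En E p (Suc k)\<^esub> x) = f \<otimes>\<^bsub>En E p (Suc k)\<^esub> x"
    using some_in_rcos_Fn[OF x] by (auto simp: r_coset_def)
  have fZ: "f \<in> Zn E p (Suc k)"
    using f Fn_subset_Zn by blast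
  have fc: "f \<in> carrier (En E p (Suc k))"
    using fZ subgroup.mem_carrier[OF subgroup_Zn] by blast
  have "Zn E p k #>\<^bsub>En E p k\<^esub> phi E p (Suc k) (f \<otimes>\<^bsub>En E p (Suc k)\<^esub> x)
      = (Zn E p k #>\<^bsub>En E p k\<^esub> phi E p (Suc k) f) <#>\<^bsub>En E p k\<^esub> (Zn E p k #>\<^bsub>En E p k\<^esub> phi E p (Suc k) x)"
    using hom_mult[OF phi_hom_Mod_Zn fc x] by simp
  also have "Zn E p k #>\<^bsub>En E p k\<^esub> phi E p (Suc k) f = Zn E p k"
    using phi_Zn[OF fZ] by (simp add: Zk.rcos_const)
  also have "Zn E p k <#>\<^bsub>En E p k\<^esub> (Zn E p k #>\<^bsub>En E p k\<^esub> phi E p (Suc k) x)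
      = Zn E p k #>\<^bsub>En E p k\<^esub> phi E p (Suc k) x"
    by (rule Zk.rcosets_mult_eq[OF Zk.rcosetsI[OF Zk.subset phi_closed[OF x]]])
  finally show ?thesis
    by (simp add: some)
qed

lemma phi_Kn_closed: "B \<in> carrier (Kn E p (Suc k)) \<Longrightarrow> phi_Kn k B \<in> carrier (Kn E p k)"
  by (auto simp: carrier_Kn phi_Kn_def intro!: phi_closed some_rcos_Fn_closed)

lemma rcos_Ln_phi_Kn:
  "x \<in> carrier (En E p (Suc k)) \<Longrightarrow>
   Ln_in_Kn k #>\<^bsub>Kn E p k\<^esub> phi_Kn k (Fn E p (Suc k) #>\<^bsub>En E p (Suc k)\<^esub> x)
     = Ln_in_Kn k #>\<^bsub>Kn E p k\<^esub> (Fn E p k #>\<^bsub>En E p k\<^esub> phi E p (Suc k) x)"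
  unfolding phi_Kn_def
  by (rule rcos_Ln_in_Kn_eqI[OF _ phi_closed[OF _] rcos_Zn_phi_some])
     (auto intro!: phi_closed some_rcos_Fn_closed)

lemma phi_Kn_hom_Mod_Ln:
  "(\<lambda>B. Ln_in_Kn k #>\<^bsub>Kn E p k\<^esub> phi_Kn k B) \<in> hom (Kn E p (Suc k)) (Kn E p k Mod Ln_in_Kn k)"
proof (rule homI)
  fix B assume "B \<in> carrier (Kn E p (Suc k))"
  then show "Ln_in_Kn k #>\<^bsub>Kn E p k\<^esub> phi_Kn k B \<in> carrier (Kn E p k Mod Ln_in_Kn k)"
    by (simp add: carrier_FactGroup phi_Kn_closed)
next
  fix B C assume "B \<in> carrier (Kn E p (Suc k))" "C \<in> carrier (Kn E p (Suc k))"
  then obtain x y where x: "x \<in> carrier (En E p (Suc k))" "B = Fn E p (Suc k) #>\<^bsub>En E p (Suc k)\<^esub> x"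
    and y: "y \<in> carrier (En E p (Suc k))" "C = Fn E p (Suc k) #>\<^bsub>En E p (Suc k)\<^esub> y"
    by (auto simp: carrier_Kn)
  have xy: "x \<otimes>\<^bsub>En E p (Suc k)\<^esub> y \<in> carrier (En E p (Suc k))"
    by (rule monoid.m_closed[OF group.is_monoid[OF group_En] x(1) y(1)])
  have \<phi>xy: "phi E p (Suc k) x \<otimes>\<^bsub>En E p k\<^esub> phi E p (Suc k) y \<in> carrier (En E p k)"
    by (rule monoid.m_closed[OF group.is_monoid[OF group_En] phi_closed[OF x(1)] phi_closed[OF y(1)]])
  have "Ln_in_Kn k #>\<^bsub>Kn E p k\<^esub> phi_Kn k (B \<otimes>\<^bsub>Kn E p (Suc k)\<^esub> C)
      = Ln_in_Kn k #>\<^bsub>Kn E p k\<^esub> (Fn E p k #>\<^bsub>En E p k\<^esub> phi E p (Suc k) (x \<otimes>\<^bsub>En E p (Suc k)\<^esub> y))"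
    using x y xy by (simp add: rcos_Fn_mult rcos_Ln_phi_Kn)
  also have "\<dots> = Ln_in_Kn k #>\<^bsub>Kn E p k\<^esub>
                   (Fn E p k #>\<^bsub>En E p k\<^esub> (phi E p (Suc k) x \<otimes>\<^bsub>En E p k\<^esub> phi E p (Suc k) y))"
    by (rule rcos_Ln_in_Kn_eqI[OF phi_closed[OF xy] \<phi>xy rcos_phi_mult[OF x(1) y(1)]])
  also have "\<dots> = Ln_in_Kn k #>\<^bsub>Kn E p k\<^esub>
                   ((Fn E p k #>\<^bsub>En E p k\<^esub> phi E p (Suc k) x) \<otimes>\<^bsub>Kn E p k\<^esub> (Fn E p k #>\<^bsub>En E p k\<^esub> phi E p (Suc k) y))"
    using x y by (simp add: rcos_Fn_mult phi_closed)
  also have "\<dots> = (Ln_in_Kn k #>\<^bsub>Kn E p k\<^esub> (Fn E p k #>\<^bsub>En E p k\<^esub> phi E p (Suc k) x)) \<otimes>\<^bsub>Kn E p k Mod Ln_in_Kn k\<^esub>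
                   (Ln_in_Kn k #>\<^bsub>Kn E p k\<^esub> (Fn E p k #>\<^bsub>En E p k\<^esub> phi E p (Suc k) y))"
    using x y by (simp add: normal.rcos_sum[OF normal_Ln_in_Kn] carrier_Kn phi_closed)
  also have "\<dots> = (Ln_in_Kn k #>\<^bsub>Kn E p k\<^esub> phi_Kn k B) \<otimes>\<^bsub>Kn E p k Mod Ln_in_Kn k\<^esub>
                   (Ln_in_Kn k #>\<^bsub>Kn E p k\<^esub> phi_Kn k C)"
    using x y by (simp add: rcos_Ln_phi_Kn)
  finally show "Ln_in_Kn k #>\<^bsub>Kn E p k\<^esub> phi_Kn k (B \<otimes>\<^bsub>Kn E p (Suc k)\<^esub> C)
      = (Ln_in_Kn k #>\<^bsub>Kn E p k\<^esub> phi_Kn k B) \<otimes>\<^bsub>Kn E p k Mod Ln_in_Kn k\<^esub>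
        (Ln_in_Kn k #>\<^bsub>Kn E p k\<^esub> phi_Kn k C)" .
qed

lemma rcos_phi_Kn_shift:
  assumes "B \<in> carrier (Kn E p (Suc k))"
  shows "Ln_in_Kn k #>\<^bsub>Kn E p k\<^esub> phi_Kn k (shift p (Suc k) ` B)
       = Ln_in_Kn k #>\<^bsub>Kn E p k\<^esub> shift p k ` phi_Kn k B"
proof -
  obtain x where x: "x \<in> carrier (En E p (Suc k))" "B = Fn E p (Suc k) #>\<^bsub>En E p (Suc k)\<^esub> x"
    using assms by (auto simp: carrier_Kn)
  define r where "r = (SOME y. y \<in> Fn E p (Suc k) #>\<^bsub>En E p (Suc k)\<^esub> x)"
  have r: "r \<in> carrier (En E p (Suc k))"
    unfolding r_def using x(1) by (rule some_rcos_Fn_closed)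
  have "Ln_in_Kn k #>\<^bsub>Kn E p k\<^esub> phi_Kn k (shift p (Suc k) ` B)
      = Ln_in_Kn k #>\<^bsub>Kn E p k\<^esub> (Fn E p k #>\<^bsub>En E p k\<^esub> phi E p (Suc k) (shift p (Suc k) x))"
    using x by (simp add: shift_rcos_Fn rcos_Ln_phi_Kn shift_closed)
  also have "\<dots> = Ln_in_Kn k #>\<^bsub>Kn E p k\<^esub> (Fn E p k #>\<^bsub>En E p k\<^esub> shift p k (phi E p (Suc k) r))"
  proof (rule rcos_Ln_in_Kn_eqI)
    show "Zn E p k #>\<^bsub>En E p k\<^esub> phi E p (Suc k) (shift p (Suc k) x)
        = Zn E p k #>\<^bsub>En E p k\<^esub> shift p k (phi E p (Suc k) r)"
      unfolding rcos_phi_shift[OF x(1)]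
      using x(1) r rcos_Zn_phi_some[OF x(1)]
      by (intro rcos_Zn_shift phi_closed) (simp_all add: r_def)
  qed (use x r in \<open>simp_all add: phi_closed shift_closed\<close>)
  also have "\<dots> = Ln_in_Kn k #>\<^bsub>Kn E p k\<^esub> shift p k ` phi_Kn k B"
    using r by (simp add: phi_Kn_def x(2) r_def[symmetric] shift_rcos_Fn phi_closed)
  finally show ?thesis .
qed

lemma phi_Kn_Ln_in_Kn: "phi_Kn k ` Ln_in_Kn (Suc k) \<subseteq> Ln_in_Kn k"
proof
  fix C assume "C \<in> phi_Kn k ` Ln_in_Kn (Suc k)"
  then obtain z where z: "z \<in> Zn E p (Suc k)" "C = phi_Kn k (Fn E p (Suc k) #>\<^bsub>En E p (Suc k)\<^esub> z)"
    by (auto simp: Ln_in_Kn_def)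
  have zc: "z \<in> carrier (En E p (Suc k))"
    using z(1) subgroup.mem_carrier[OF subgroup_Zn] by blast
  obtain f where f: "f \<in> Fn E p (Suc k)"
    and some: "(SOME y. y \<in> Fn E p (Suc k) #>\<^bsub>En E p (Suc k)\<^esub> z) = f \<otimes>\<^bsub>En E p (Suc k)\<^esub> z"
    using some_in_rcos_Fn[OF zc] by (auto simp: r_coset_def)
  have "f \<otimes>\<^bsub>En E p (Suc k)\<^esub> z \<in> Zn E p (Suc k)"
    using f z(1) Fn_subset_Zn subgroup.m_closed[OF subgroup_Zn] by blast
  then show "C \<in> Ln_in_Kn k"
    using phi_Zn by (auto simp: z(2) phi_Kn_def some Ln_in_Kn_def)
qed

lemma rcos_Ln_phi_Kn_Fn:
  "Ln_in_Kn k #>\<^bsub>Kn E p k\<^esub> phi_Kn k (Fn E p (Suc k)) = Ln_in_Kn k #>\<^bsub>Kn E p k\<^esub> Fn E p k"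
proof -
  have "phi_Kn k (Fn E p (Suc k)) \<in> Ln_in_Kn k"
    using phi_Kn_Ln_in_Kn Fn_in_Ln_in_Kn by blast
  then show ?thesis
    using Fn_in_Ln_in_Kn subgroup.rcos_const[OF subgroup_Ln_in_Kn group_Kn] by simp
qed

lemma semidirect_cyclic_morphism_phi_Kn:
  "semidirect_cyclic_morphism (Kn E p (Suc k)) (\<lambda>B. shift p (Suc k) ` B) (p ^ Suc k) (Ln_in_Kn (Suc k))
     (Kn E p k) (\<lambda>B. shift p k ` B) (p ^ k) (Ln_in_Kn k) (phi_Kn k)"
  by (intro semidirect_cyclic_morphism.intro semidirect_cyclic_morphism_axioms.intro
      cyclic_action_central_Kn)
     (simp_all add: phi_Kn_closed phi_Kn_hom_Mod_Ln rcos_phi_Kn_shift phi_Kn_Ln_in_Kn)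

lemma Jn_Mod_Ln_hom_phi_Kn:
  "\<exists>h \<in> hom (Jn E p (Suc k) Mod Ln E p (Suc k)) (Jn E p k Mod Ln E p k).
     \<forall>B \<in> carrier (Kn E p (Suc k)). \<forall>i < p ^ Suc k.
       h (Ln E p (Suc k) #>\<^bsub>Jn E p (Suc k)\<^esub> (B, i)) = Ln E p k #>\<^bsub>Jn E p k\<^esub> (phi_Kn k B, i mod p ^ k)"
  unfolding Jn_def Ln_eq
  by (rule semidirect_cyclic_morphism.semidirect_cyclic_FactGroup_hom[OF semidirect_cyclic_morphism_phi_Kn])

lemma Jn_Mod_Ln_hom:
  "\<exists>h \<in> hom (Jn E p (Suc k) Mod Ln E p (Suc k)) (Jn E p k Mod Ln E p k).
     (\<forall>x \<in> carrier (En E p (Suc k)).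
        h (Ln E p (Suc k) #>\<^bsub>Jn E p (Suc k)\<^esub> inK E p (Suc k) x)
          = Ln E p k #>\<^bsub>Jn E p k\<^esub> inK E p k (phi E p (Suc k) x))
     \<and> h (Ln E p (Suc k) #>\<^bsub>Jn E p (Suc k)\<^esub> alpha E p (Suc k))
          = Ln E p k #>\<^bsub>Jn E p k\<^esub> alpha E p k"
proof -
  from Jn_Mod_Ln_hom_phi_Kn[of k] obtain h
    where h: "h \<in> hom (Jn E p (Suc k) Mod Ln E p (Suc k)) (Jn E p k Mod Ln E p k)"
    and h_coset: "\<forall>B \<in> carrier (Kn E p (Suc k)). \<forall>i < p ^ Suc k.
        h (Ln E p (Suc k) #>\<^bsub>Jn E p (Suc k)\<^esub> (B, i)) = Ln E p k #>\<^bsub>Jn E p k\<^esub> (phi_Kn k B, i mod p ^ k)"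
    by blast
  have Kn_coset: "Fn E p n #>\<^bsub>En E p n\<^esub> x \<in> carrier (Kn E p n)" if "x \<in> carrier (En E p n)" for n x
    using that by (simp add: carrier_Kn)
  have Fn_Kn: "Fn E p n \<in> carrier (Kn E p n)" for n
    using Fn_in_Ln_in_Kn subgroup.mem_carrier[OF subgroup_Ln_in_Kn] by blast
  have "h (Ln E p (Suc k) #>\<^bsub>Jn E p (Suc k)\<^esub> inK E p (Suc k) x)
      = Ln E p k #>\<^bsub>Jn E p k\<^esub> inK E p k (phi E p (Suc k) x)"
    if x: "x \<in> carrier (En E p (Suc k))" for x
  proof -
    have "h (Ln E p (Suc k) #>\<^bsub>Jn E p (Suc k)\<^esub> inK E p (Suc k) x)
        = Ln E p k #>\<^bsub>Jn E p k\<^esub> (phi_Kn k (Fn E p (Suc k) #>\<^bsub>En E p (Suc k)\<^esub> x), 0)"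
      using h_coset Kn_coset[OF x] p_power_pos[of "Suc k"] by (simp add: inK_def)
    also have "\<dots> = Ln E p k #>\<^bsub>Jn E p k\<^esub> inK E p k (phi E p (Suc k) x)"
      unfolding inK_def
      by (rule rcos_Ln_eq[OF phi_Kn_closed[OF Kn_coset[OF x]] Kn_coset[OF phi_closed[OF x]]
            p_power_pos rcos_Ln_phi_Kn[OF x]])
    finally show ?thesis .
  qed
  moreover have "h (Ln E p (Suc k) #>\<^bsub>Jn E p (Suc k)\<^esub> alpha E p (Suc k))
      = Ln E p k #>\<^bsub>Jn E p k\<^esub> (phi_Kn k (Fn E p (Suc k)), 1 mod p ^ Suc k mod p ^ k)"
    unfolding alpha_def by (rule h_coset[rule_format, OF Fn_Kn mod_less_divisor[OF p_power_pos]])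
  moreover have "1 mod p ^ Suc k mod p ^ k = 1 mod p ^ k"
    by (simp add: mod_mod_cancel)
  moreover have "Ln E p k #>\<^bsub>Jn E p k\<^esub> (phi_Kn k (Fn E p (Suc k)), 1 mod p ^ k)
      = Ln E p k #>\<^bsub>Jn E p k\<^esub> alpha E p k"
    unfolding alpha_def
    by (rule rcos_Ln_eq[OF phi_Kn_closed[OF Fn_Kn] Fn_Kn mod_less_divisor[OF p_power_pos] rcos_Ln_phi_Kn_Fn])
  ultimately show ?thesis
    using h by auto
qed

end

theorem theorem4p3:
  fixes E :: "('a, 'b) monoid_scheme" and p n :: nat
  assumes "group E" and "finite (carrier E)"
    and "Factorial_Ring.prime p" and "\<exists>k. order E = p ^ k"
    and "nilpotency_class_two E"
    and "cyclic_group (E\<lparr>carrier := grp_center E\<rparr>)"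
    and "n \<ge> 1"
  shows "(\<exists>\<psi> \<in> hom (En E p n Mod Zn E p n) (En E p (n - 1) Mod Zn E p (n - 1)).
            \<forall>x \<in> carrier (En E p n).
              \<psi> (Zn E p n #>\<^bsub>En E p n\<^esub> x) = Zn E p (n - 1) #>\<^bsub>En E p (n - 1)\<^esub> phi E p n x)
       \<and> (\<exists>h \<in> hom (Jn E p n Mod Ln E p n) (Jn E p (n - 1) Mod Ln E p (n - 1)).
            (\<forall>x \<in> carrier (En E p n).
               h (Ln E p n #>\<^bsub>Jn E p n\<^esub> inK E p n x)
                 = Ln E p (n - 1) #>\<^bsub>Jn E p (n - 1)\<^esub> inK E p (n - 1) (phi E p n x))
            \<and> h (Ln E p n #>\<^bsub>Jn E p n\<^esub> alpha E p n)
                 = Ln E p (n - 1) #>\<^bsub>Jn E p (n - 1)\<^esub> alpha E p (n - 1))"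
proof -
  (* Only class two (through the abelian quotient E/Z(E)) and p > 0 are used. *)
  interpret wreath_central E p
  proof (intro wreath_central.intro wreath_central_axioms.intro)
    show "group E" by fact
    show "comm_group (E Mod grp_center E)"
      using assms(5) by (intro group.comm_group_Mod_center[OF assms(1)]) (simp add: nilpotency_class_two_def)
    show "0 < p"
      using assms(3) by (simp add: prime_gt_0_nat)
  qed
  obtain k where "n = Suc k"
    using assms(7) by (cases n) auto
  then show ?thesis
    using En_Mod_Zn_hom[of k] Jn_Mod_Ln_hom[of k] by simp
qed

end
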